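(* Let $f:[0,\infty)\to(0,\infty)$ and $g:[0,\infty)\to(0,\infty)$, with $f$ non-decreasing. Define $\mu_t=\int_0^t g(s)\,ds$ and $\sigma^2_t=\int_0^t f(s)g(s)\,ds$. Then $\sigma^2$ may be expressed as a function of $\mu$, and \[ \frac{ d \log \sigma^{2}}{d \log \mu } = \frac{\mu}{\sigma^{2}}\, f\!\left( G^{-1}(\mu) \right), \] where $G^{-1}$ is the function with $G^{-1}(\mu_t)=t$. Furthermore, \[ \frac{d \log \sigma^{2}}{d \log \mu} \geq 1, \] with equality if and only if $f(s)=f(G^{-1}(\mu))$ for all $s\in[0,G^{-1}(\mu)]$. *)

theory Defs
  imports "HOL-Analysis.Analysis"
begin

definition mu :: "(real \<Rightarrow> real) \<Rightarrow> real \<Rightarrow> real" where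
  "mu g t = integral {0..t} g"

definition sigma2 :: "(real \<Rightarrow> real) \<Rightarrow> (real \<Rightarrow> real) \<Rightarrow> real \<Rightarrow> real" where
  "sigma2 f g t = integral {0..t} (\<lambda>s. f s * g s)"

definition Ginv :: "(real \<Rightarrow> real) \<Rightarrow> real \<Rightarrow> real" where
  "Ginv g = the_inv_into {0..} (mu g)"

definition sigma2_of_mu :: "(real \<Rightarrow> real) \<Rightarrow> (real \<Rightarrow> real) \<Rightarrow> real \<Rightarrow> real" where
  "sigma2_of_mu f g m = sigma2 f g (Ginv g m)"

end

theory Submission
  imports Defs
begin

text \<open>
  Since \<open>g > 0\<close>, \<open>t \<mapsto> \<mu>\<^sub>t\<close> is a strictly increasing \<open>C\<^sup>1\<close> bijection onto its range, so
  \<open>\<sigma>\<^sup>2\<close> as a function of \<open>\<mu>\<close> is \<open>\<sigma>\<^sup>2 \<circ> G\<^sup>-\<^sup>1\<close>; by the chain rule and the inverse function rule its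
  derivative at \<open>\<mu>\<^sub>t\<close> is \<open>f(t) g(t) / g(t) = f(t)\<close>, and passing to logarithms multiplies it by
  \<open>\<mu>/\<sigma>\<^sup>2\<close>. The bound is the comparison \<open>\<sigma>\<^sup>2\<^sub>t = \<integral>\<^sub>0\<^sup>t f g \<le> f(t) \<mu>\<^sub>t\<close> for non-decreasing \<open>f\<close>;
  the gap \<open>\<integral>\<^sub>0\<^sup>t (f(t) - f) g\<close> has a continuous non-negative integrand, so it vanishes
  exactly when \<open>f\<close> is constant on \<open>[0,t]\<close>.
\<close>

lemma has_real_derivative_integral_upper:
  fixes h :: "real \<Rightarrow> real"
  assumes "continuous_on {a..} h" and "a < t"
  shows "((\<lambda>u. integral {a..u} h) has_real_derivative h t) (at t)"
proof -
  have "continuous_on {a..t+1} h"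
    using assms(1) by (rule continuous_on_subset) auto
  then have "((\<lambda>u. integral {a..u} h) has_real_derivative h t) (at t within {a..t+1})"
    by (rule integral_has_real_derivative) (use assms(2) in auto)
  moreover have "t \<in> interior {a..t+1}"
    using assms(2) by simp
  ultimately show ?thesis
    by (simp only: at_within_interior)
qed

lemma integral_pos_real:
  fixes h :: "real \<Rightarrow> real"
  assumes "continuous_on {a..b} h" and "a < b" and "\<And>x. x \<in> {a..b} \<Longrightarrow> h x > 0"
  shows "integral {a..b} h > 0"
proof -
  have "integral {a..b} (\<lambda>_. 0) < integral {a..b} h"
    using assms by (intro integral_less_real) auto
  then show ?thesis
    by simp
qed

lemma strict_mono_on_integral_upper:
  fixes h :: "real \<Rightarrow> real"
  assumes cont: "continuous_on {a..} h" and pos: "\<And>x. x \<ge> a \<Longrightarrow> h x > 0"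
  shows "strict_mono_on {a..} (\<lambda>u. integral {a..u} h)"
proof (rule strict_mono_onI)
  fix u v assume "u \<in> {a..}" "v \<in> {a..}" "u < v"
  then have "h integrable_on {a..v}"
    by (intro integrable_continuous_real continuous_on_subset[OF cont]) auto
  then have "integral {a..v} h = integral {a..u} h + integral {u..v} h"
    using \<open>u \<in> {a..}\<close> \<open>u < v\<close>
    by (simp add: Henstock_Kurzweil_Integration.integral_combine)
  moreover have "integral {u..v} h > 0"
    using \<open>u \<in> {a..}\<close> \<open>u < v\<close>
    by (intro integral_pos_real continuous_on_subset[OF cont] pos) auto
  ultimately show "integral {a..u} h < integral {a..v} h"
    by simp
qed

lemma has_real_derivative_inverse_strong:
  fixes f g :: "real \<Rightarrow> real"
  assumes "open S" and "x \<in> S" and "continuous_on S f"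
    and "\<And>x. x \<in> S \<Longrightarrow> g (f x) = x"
    and "(f has_real_derivative D) (at x)" and "D \<noteq> 0"
  shows "(g has_real_derivative inverse D) (at (f x))"
  using assms unfolding has_field_derivative_def
  by (intro has_derivative_inverse_strong[of S x f g]) (auto simp: fun_eq_iff)

lemma has_real_derivative_ln_comp_exp:
  fixes F :: "real \<Rightarrow> real"
  assumes "(F has_real_derivative D) (at m)" and "m > 0" and "F m > 0"
  shows "((\<lambda>x. ln (F (exp x))) has_real_derivative m / F m * D) (at (ln m))"
proof -
  have exp_ln_m: "exp (ln m) = m"
    using assms(2) by simp
  have "((\<lambda>x. F (exp x)) has_real_derivative D * exp (ln m)) (at (ln m))"
    by (rule DERIV_chain2[OF _ DERIV_exp]) (simp only: exp_ln_m assms(1))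
  then have "((\<lambda>x. F (exp x)) has_real_derivative D * m) (at (ln m))"
    by (simp only: exp_ln_m)
  from DERIV_chain2[OF DERIV_ln this]
  have "((\<lambda>x. ln (F (exp x))) has_real_derivative inverse (F m) * (D * m)) (at (ln m))"
    using assms(3) by (simp only: exp_ln_m)
  moreover have "inverse (F m) * (D * m) = m / F m * D"
    by (simp add: divide_inverse)
  ultimately show ?thesis
    by simp
qed

lemma integral_mult_gap:
  fixes f g :: "real \<Rightarrow> real"
  assumes "continuous_on {a..b} f" and "continuous_on {a..b} g"
  shows "integral {a..b} (\<lambda>s. (f b - f s) * g s)
    = f b * integral {a..b} g - integral {a..b} (\<lambda>s. f s * g s)"
proof -
  have "(\<lambda>s. f b * g s) integrable_on {a..b}"
    by (rule integrable_continuous_real[OF continuous_on_mult[OF continuous_on_const assms(2)]])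
  moreover have "(\<lambda>s. f s * g s) integrable_on {a..b}"
    by (rule integrable_continuous_real[OF continuous_on_mult[OF assms]])
  ultimately show ?thesis
    by (simp add: left_diff_distrib integral_diff)
qed

lemma integral_mult_le_mono:
  fixes f g :: "real \<Rightarrow> real"
  assumes mono: "mono_on {a..b} f" and cf: "continuous_on {a..b} f"
    and cg: "continuous_on {a..b} g" and nonneg: "\<And>s. s \<in> {a..b} \<Longrightarrow> g s \<ge> 0"
  shows "integral {a..b} (\<lambda>s. f s * g s) \<le> f b * integral {a..b} g"
proof -
  have "(f b - f s) * g s \<ge> 0" if "s \<in> {a..b}" for s
    using mono_onD[OF mono that, of b] nonneg[OF that] that by simp
  then have "integral {a..b} (\<lambda>s. (f b - f s) * g s) \<ge> 0"
    by (intro integral_nonneg integrable_continuous_real continuous_on_mult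
        continuous_on_diff continuous_on_const cf cg)
  then show ?thesis
    using integral_mult_gap[OF cf cg] by simp
qed

lemma integral_mult_eq_mono_iff:
  fixes f g :: "real \<Rightarrow> real"
  assumes mono: "mono_on {a..b} f" and cf: "continuous_on {a..b} f"
    and cg: "continuous_on {a..b} g" and pos: "\<And>s. s \<in> {a..b} \<Longrightarrow> g s > 0" and "a < b"
  shows "integral {a..b} (\<lambda>s. f s * g s) = f b * integral {a..b} g
    \<longleftrightarrow> (\<forall>s\<in>{a..b}. f s = f b)"
proof -
  have nonneg: "(f b - f s) * g s \<ge> 0" if "s \<in> {a..b}" for s
    using mono_onD[OF mono that, of b] pos[OF that] that by simp
  have "integral {a..b} (\<lambda>s. f s * g s) = f b * integral {a..b} g
      \<longleftrightarrow> integral {a..b} (\<lambda>s. (f b - f s) * g s) = 0"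
    unfolding integral_mult_gap[OF cf cg] by linarith
  also have "\<dots> \<longleftrightarrow> (\<forall>s\<in>{a..b}. (f b - f s) * g s = 0)"
    by (intro integral_eq_0_iff[OF _ \<open>a < b\<close> nonneg] continuous_on_mult continuous_on_diff
        continuous_on_const cf cg)
  also have "\<dots> \<longleftrightarrow> (\<forall>s\<in>{a..b}. f s = f b)"
    using pos by (intro ball_cong) (auto simp: less_le)
  finally show ?thesis .
qed

lemma Ginv_mu:
  assumes "continuous_on {0..} g" and "\<forall>s\<ge>0. g s > 0" and "t \<ge> 0"
  shows "Ginv g (mu g t) = t"
proof -
  have "strict_mono_on {0..} (mu g)"
    using strict_mono_on_integral_upper[of 0 g] assms(1,2) by (simp add: mu_def[abs_def])
  then show ?thesis
    unfolding Ginv_def using assms(3) by (simp add: strict_mono_on_imp_inj_on the_inv_into_f_f)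
qed

lemma sigma2_of_mu_mu:
  assumes "continuous_on {0..} g" and "\<forall>s\<ge>0. g s > 0" and "t \<ge> 0"
  shows "sigma2_of_mu f g (mu g t) = sigma2 f g t"
  using Ginv_mu[OF assms] by (simp add: sigma2_of_mu_def)

lemma mu_pos:
  assumes "continuous_on {0..} g" and "\<forall>s\<ge>0. g s > 0" and "t > 0"
  shows "mu g t > 0"
  unfolding mu_def using assms
  by (intro integral_pos_real continuous_on_subset[OF assms(1)]) auto

lemma sigma2_pos:
  assumes "continuous_on {0..} f" and "continuous_on {0..} g"
    and "\<forall>s\<ge>0. f s > 0" and "\<forall>s\<ge>0. g s > 0" and "t > 0"
  shows "sigma2 f g t > 0"
  unfolding sigma2_def using assms
  by (intro integral_pos_real continuous_on_subset[OF continuous_on_mult[OF assms(1,2)]]) auto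

lemma sigma2_le_mult_mu:
  assumes "mono_on {0..} f" and "continuous_on {0..} f" and "continuous_on {0..} g"
    and "\<forall>s\<ge>0. g s > 0"
  shows "sigma2 f g t \<le> f t * mu g t"
  unfolding sigma2_def mu_def using assms
  by (intro integral_mult_le_mono mono_on_subset[OF assms(1)] continuous_on_subset[OF assms(2)]
      continuous_on_subset[OF assms(3)]) (auto simp: less_imp_le)

lemma sigma2_eq_mult_mu_iff:
  assumes "mono_on {0..} f" and "continuous_on {0..} f" and "continuous_on {0..} g"
    and "\<forall>s\<ge>0. g s > 0" and "t > 0"
  shows "sigma2 f g t = f t * mu g t \<longleftrightarrow> (\<forall>s\<in>{0..t}. f s = f t)"
  unfolding sigma2_def mu_def using assms
  by (intro integral_mult_eq_mono_iff mono_on_subset[OF assms(1)] continuous_on_subset[OF assms(2)]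
      continuous_on_subset[OF assms(3)]) auto

lemma has_real_derivative_sigma2_of_mu:
  assumes cf: "continuous_on {0..} f" and cg: "continuous_on {0..} g"
    and gpos: "\<forall>s\<ge>0. g s > 0" and "t > 0"
  shows "(sigma2_of_mu f g has_real_derivative f t) (at (mu g t))"
proof -
  have dmu: "(mu g has_real_derivative g x) (at x)" if "x > 0" for x
    using has_real_derivative_integral_upper[OF cg that] by (simp add: mu_def[abs_def])
  have "continuous_on {0<..} (mu g)"
    using dmu by (intro continuous_at_imp_continuous_on) (auto intro: DERIV_isCont)
  moreover have gt: "g t \<noteq> 0"
    using gpos less_imp_le[OF \<open>t > 0\<close>] by fastforce
  ultimately have dGinv: "(Ginv g has_real_derivative inverse (g t)) (at (mu g t))"
    using \<open>t > 0\<close> Ginv_mu[OF cg gpos] dmu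
    by (intro has_real_derivative_inverse_strong[of "{0<..}" t "mu g"]) auto
  have "(sigma2 f g has_real_derivative f t * g t) (at t)"
    unfolding sigma2_def[abs_def]
    by (rule has_real_derivative_integral_upper[OF continuous_on_mult[OF cf cg] \<open>t > 0\<close>])
  then have "(sigma2 f g has_real_derivative f t * g t) (at (Ginv g (mu g t)))"
    by (simp only: Ginv_mu[OF cg gpos less_imp_le[OF \<open>t > 0\<close>]])
  from DERIV_chain[OF this dGinv]
  have "(sigma2 f g \<circ> Ginv g has_real_derivative f t * g t * inverse (g t)) (at (mu g t))" .
  moreover have "f t * g t * inverse (g t) = f t"
    using gt by simp
  moreover have "sigma2_of_mu f g = sigma2 f g \<circ> Ginv g"
    by (simp add: fun_eq_iff sigma2_of_mu_def)
  ultimately show ?thesis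
    by simp
qed

theorem lemma1:
  fixes f g :: "real \<Rightarrow> real"
  assumes fpos: "\<forall>s\<ge>0. f s > 0"
    and gpos: "\<forall>s\<ge>0. g s > 0"
    and fmono: "mono_on {0..} f"
    and fcont: "continuous_on {0..} f"
    and gcont: "continuous_on {0..} g"
  shows "(\<forall>t\<ge>0. Ginv g (mu g t) = t \<and> sigma2 f g t = sigma2_of_mu f g (mu g t))
    \<and> (\<forall>t>0. let m = mu g t;
                 r = m / sigma2_of_mu f g m * f (Ginv g m)
             in ((\<lambda>x. ln (sigma2_of_mu f g (exp x))) has_real_derivative r) (at (ln m))
                \<and> r \<ge> 1
                \<and> (r = 1 \<longleftrightarrow> (\<forall>s\<in>{0..Ginv g m}. f s = f (Ginv g m))))"
proof (intro conjI allI impI)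
  fix t :: real
  assume "t \<ge> 0"
  then show "Ginv g (mu g t) = t" "sigma2 f g t = sigma2_of_mu f g (mu g t)"
    using Ginv_mu sigma2_of_mu_mu gcont gpos by simp_all
next
  fix t :: real
  assume "t > 0"
  define m where "m = mu g t"
  define S where "S = sigma2 f g t"
  have m_pos: "m > 0" and S_pos: "S > 0"
    unfolding m_def S_def using mu_pos sigma2_pos fcont gcont fpos gpos \<open>t > 0\<close> by blast+
  have Ginv_m: "Ginv g m = t" and S_of_m: "sigma2_of_mu f g m = S"
    unfolding m_def S_def using Ginv_mu[OF gcont gpos] sigma2_of_mu_mu[OF gcont gpos] \<open>t > 0\<close>
    by simp_all
  have "((\<lambda>x. ln (sigma2_of_mu f g (exp x))) has_real_derivative m / S * f t) (at (ln m))"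
    using has_real_derivative_ln_comp_exp[OF has_real_derivative_sigma2_of_mu[OF fcont gcont gpos \<open>t > 0\<close>]]
      m_pos S_pos S_of_m unfolding m_def by simp
  moreover have "m / S * f t \<ge> 1"
    using sigma2_le_mult_mu[OF fmono fcont gcont gpos, of t] S_pos
    unfolding m_def S_def by (simp add: field_simps)
  moreover have "m / S * f t = 1 \<longleftrightarrow> (\<forall>s\<in>{0..t}. f s = f t)"
    using sigma2_eq_mult_mu_iff[OF fmono fcont gcont gpos \<open>t > 0\<close>] S_pos
    unfolding m_def S_def by (auto simp: field_simps)
  ultimately show "let m = mu g t; r = m / sigma2_of_mu f g m * f (Ginv g m)
    in ((\<lambda>x. ln (sigma2_of_mu f g (exp x))) has_real_derivative r) (at (ln m))
       \<and> r \<ge> 1 \<and> (r = 1 \<longleftrightarrow> (\<forall>s\<in>{0..Ginv g m}. f s = f (Ginv g m)))"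
    unfolding Let_def m_def[symmetric] Ginv_m S_of_m by blast
qed

end
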